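(* Let $\Delta\ge 1$ and $0\le\lambda<1$. Let $T$ be a rooted tree with $n$ vertices and $\Delta(T)\le\Delta$. Then there is a subtree $Q$ of $T$ containing the root with $|Q|\in[(1-2\lambda)n,\,(1-\lambda)n+2\Delta]$ such that $T\setminus Q$ has at most $\Delta$ connected components, each of order at most $\lambda n$.
   Context: For graphs $T\supseteq Q$, $T\setminus Q$ denotes the graph with edge set $E(T)\setminus E(Q)$ and isolated vertices deleted. $|Q|$ is the number of vertices of $Q$; $\Delta(T)$ is the maximum degree. *)

theory Defs
  imports Complex_Main
begin

definition is_graph :: "'a set \<Rightarrow> 'a set set \<Rightarrow> bool" where
  "is_graph V E \<longleftrightarrow> finite V \<and>
     (\<forall>e\<in>E. \<exists>u v. e = {u, v} \<and> u \<noteq> v \<and> u \<in> V \<and> v \<in> V)"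

definition adj :: "'a set set \<Rightarrow> 'a \<Rightarrow> 'a \<Rightarrow> bool" where
  "adj E u v \<longleftrightarrow> {u, v} \<in> E"

definition conn :: "'a set set \<Rightarrow> 'a \<Rightarrow> 'a \<Rightarrow> bool" where
  "conn E = (adj E)\<^sup>*\<^sup>*"

definition connected_graph :: "'a set \<Rightarrow> 'a set set \<Rightarrow> bool" where
  "connected_graph V E \<longleftrightarrow> (\<forall>u\<in>V. \<forall>v\<in>V. conn E u v)"

text \<open>Acyclic: no edge lies on a cycle, i.e. after deleting any edge its endpoints
  are no longer connected.\<close>
definition acyclic_graph :: "'a set set \<Rightarrow> bool" where
  "acyclic_graph E \<longleftrightarrow> (\<forall>e\<in>E. \<forall>u v. e = {u, v} \<longrightarrow> \<not> conn (E - {e}) u v)"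

definition is_tree :: "'a set \<Rightarrow> 'a set set \<Rightarrow> bool" where
  "is_tree V E \<longleftrightarrow> is_graph V E \<and> V \<noteq> {} \<and> connected_graph V E \<and> acyclic_graph E"

definition degree :: "'a set set \<Rightarrow> 'a \<Rightarrow> nat" where
  "degree E v = card {e\<in>E. v \<in> e}"

definition components :: "'a set \<Rightarrow> 'a set set \<Rightarrow> 'a set set" where
  "components V E = (\<lambda>v. {u\<in>V. conn E v u}) ` V"

text \<open>T minus Q: edge set E(T) - E(Q), isolated vertices deleted, so the vertex
  set is the set of endpoints of the remaining edges.\<close>
definition diff_verts :: "'a set set \<Rightarrow> 'a set set \<Rightarrow> 'a set" where
  "diff_verts ET EQ = \<Union>(ET - EQ)"

end

theory Submission
  imports Defs
begin

text \<open>Let n = |T|. Choose a vertex v of minimal subtree size among those whose subtree has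
  more than \<lambda>n vertices. Every branch hanging below v then has at most \<lambda>n vertices, there
  are at most \<Delta> of them, and together with v they cover the subtree of v. Hence the
  quantities |B| - 1 over these branches B sum to more than \<lambda>n - 1 - \<Delta>, each being at
  most \<lambda>n, so a greedily chosen subfamily has sum between \<lambda>n - 2\<Delta> and 2\<lambda>n.
  Q is obtained from T by deleting the chosen branches except for their top vertices:
  it remains a tree containing the root, and T \<setminus> Q consists of the chosen branches.\<close>

lemma conn_refl [simp]: "conn F x x"
  unfolding conn_def by simp

lemma conn_step: "conn F x y \<Longrightarrow> {y, z} \<in> F \<Longrightarrow> conn F x z"
  unfolding conn_def adj_def by (simp add: rtranclp.rtrancl_into_rtrancl)

lemma conn_trans: "conn F x y \<Longrightarrow> conn F y z \<Longrightarrow> conn F x z"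
  unfolding conn_def by (rule rtranclp_trans)

lemma conn_sym: "conn F x y \<Longrightarrow> conn F y x"
  unfolding conn_def
proof (induction rule: rtranclp.induct)
  case (rtrancl_into_rtrancl a b c)
  then have "adj F c b" by (simp add: adj_def insert_commute)
  then show ?case using rtrancl_into_rtrancl(3) by (meson converse_rtranclp_into_rtranclp)
qed simp

lemma conn_mono: "conn F x y \<Longrightarrow> F \<subseteq> G \<Longrightarrow> conn G x y"
  unfolding conn_def adj_def using mono_rtranclp[of "\<lambda>u v. {u, v} \<in> F" "\<lambda>u v. {u, v} \<in> G"]
  by blast

lemma conn_map:
  assumes "conn F a b"
    and "\<And>x y. {x, y} \<in> F \<Longrightarrow> p x = p y \<or> {p x, p y} \<in> G"
  shows "conn G (p a) (p b)"
  using assms(1) unfolding conn_def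
proof (induction rule: rtranclp_induct)
  case (step y z)
  then have "p y = p z \<or> {p y, p z} \<in> G" using assms(2) by (simp add: adj_def)
  then show ?case using step(3) by (metis conn_def conn_step)
qed simp

lemma conn_imp_edge_at: "conn F a u \<Longrightarrow> a \<noteq> u \<Longrightarrow> \<exists>f\<in>F. a \<in> f"
  unfolding conn_def by (induction rule: converse_rtranclp_induct) (auto simp: adj_def)

lemma acyclic_graph_subset: "acyclic_graph E \<Longrightarrow> F \<subseteq> E \<Longrightarrow> acyclic_graph F"
  unfolding acyclic_graph_def by (meson Diff_mono conn_mono order_refl subsetD)

lemma subset_sum_between:
  fixes w :: "'b \<Rightarrow> real"
  assumes "finite A" "\<And>a. a \<in> A \<Longrightarrow> 0 \<le> w a" "\<And>a. a \<in> A \<Longrightarrow> w a \<le> M" "0 \<le> M"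
    and "L \<le> sum w A"
  shows "\<exists>S\<subseteq>A. L \<le> sum w S \<and> sum w S \<le> max L 0 + M"
  using assms
proof (induction A rule: finite_induct)
  case (insert a A)
  show ?case
  proof (cases "L \<le> sum w A")
    case True
    then show ?thesis using insert.IH insert.prems by (meson subset_insertI2 insertCI)
  next
    case False
    then have "sum w (insert a A) \<le> max L 0 + M"
      using insert.hyps insert.prems(2)[of a] by simp
    then show ?thesis using insert.prems(4) by blast
  qed
qed auto

locale tree_graph =
  fixes V :: "'a set" and E :: "'a set set"
  assumes tree: "is_tree V E"
begin

lemma finite_V: "finite V"
  using tree by (simp add: is_tree_def is_graph_def)

lemma edge_doubleton: "e \<in> E \<Longrightarrow> \<exists>u v. e = {u, v} \<and> u \<noteq> v \<and> u \<in> V \<and> v \<in> V"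
  using tree unfolding is_tree_def is_graph_def by blast

lemma edge_endpoints: "{x, y} \<in> E \<Longrightarrow> x \<noteq> y \<and> x \<in> V \<and> y \<in> V"
  using edge_doubleton[of "{x, y}"] by (auto simp: doubleton_eq_iff)

lemma finite_E: "finite E"
proof -
  have "E \<subseteq> Pow V" using edge_doubleton by blast
  then show ?thesis using finite_V by (meson finite_Pow_iff finite_subset)
qed

lemma tree_connected: "u \<in> V \<Longrightarrow> w \<in> V \<Longrightarrow> conn E u w"
  using tree by (simp add: is_tree_def connected_graph_def)

lemma conn_target_in_V: "conn F a u \<Longrightarrow> F \<subseteq> E \<Longrightarrow> a \<in> V \<Longrightarrow> u \<in> V"
  unfolding conn_def
proof (induction rule: rtranclp_induct)
  case (step y z)
  then show ?case using edge_endpoints[of y z] by (auto simp: adj_def)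
qed

lemma edge_is_bridge: "{a, b} \<in> E \<Longrightarrow> \<not> conn (E - {{a, b}}) a b"
  using tree unfolding is_tree_def acyclic_graph_def by blast

definition branch :: "'a \<Rightarrow> 'a \<Rightarrow> 'a set" where
  "branch a b = {u. conn (E - {{a, b}}) b u}"

lemma branch_self [simp]: "b \<in> branch a b"
  by (simp add: branch_def)

lemma source_notin_branch: "{a, b} \<in> E \<Longrightarrow> a \<notin> branch a b"
  unfolding branch_def by (metis edge_is_bridge conn_sym mem_Collect_eq)

lemma branch_closed:
  assumes "y \<in> branch a b" "{y, z} \<in> E" "{y, z} \<noteq> {a, b}"
  shows "z \<in> branch a b"
  using assms conn_step[of "E - {{a, b}}" b y z] unfolding branch_def by simp

lemma edge_leaving_branch:
  assumes "{a, b} \<in> E" "x \<in> branch a b" "{x, y} \<in> E" "y \<notin> branch a b"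
  shows "x = b \<and> y = a"
proof -
  have "{x, y} = {a, b}" using branch_closed assms(2-4) by blast
  moreover have "x \<noteq> a" using source_notin_branch assms(1,2) by blast
  ultimately show ?thesis by (auto simp: doubleton_eq_iff)
qed

lemma branch_subset_V: "{a, b} \<in> E \<Longrightarrow> branch a b \<subseteq> V"
  unfolding branch_def using conn_target_in_V[of "E - {{a, b}}" b] edge_endpoints by blast

lemma finite_branch: "{a, b} \<in> E \<Longrightarrow> finite (branch a b)"
  using branch_subset_V finite_V by (rule finite_subset)

lemma card_branch_ge_1: "{a, b} \<in> E \<Longrightarrow> 1 \<le> card (branch a b)"
  using finite_branch branch_self[of b a] by (metis One_nat_def Suc_leI card_gt_0_iff empty_iff)

lemma branch_cover:
  assumes "{a, b} \<in> E" "u \<in> V"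
  shows "u \<in> branch a b \<or> u \<in> branch b a"
proof -
  have "conn E a u" using tree_connected edge_endpoints assms by blast
  then show ?thesis unfolding conn_def
  proof (induction rule: rtranclp_induct)
    case (step y z)
    then have yz: "{y, z} \<in> E" by (simp add: adj_def)
    show ?case
    proof (cases "{y, z} = {a, b}")
      case True
      then have "z = a \<or> z = b" by (metis doubleton_eq_iff)
      then show ?thesis by auto
    next
      case False
      then have "{y, z} \<noteq> {b, a}" by (simp add: insert_commute)
      then show ?thesis using step(3) branch_closed yz False by blast
    qed
  qed simp
qed

lemma conn_into_branch:
  assumes "{a, b} \<in> E" "F \<subseteq> E" "conn F s y" "s \<notin> branch a b" "y \<in> branch a b"
  shows "{a, b} \<in> F \<and> conn F s a"
  using assms(3,5) unfolding conn_def
proof (induction rule: rtranclp_induct)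
  case (step y z)
  show ?case
  proof (cases "y \<in> branch a b")
    case False
    have yz: "{y, z} \<in> F" using step(2) by (simp add: adj_def)
    then have "{z, y} \<in> E" using assms(2) by (auto simp: insert_commute)
    then have "z = b \<and> y = a" using edge_leaving_branch[OF assms(1) step(4)] False by blast
    then show ?thesis using yz step(1) by (simp add: insert_commute)
  next
    case True
    then show ?thesis using step(3) by blast
  qed
next
  case base
  then show ?case using assms(4) by blast
qed

lemma conn_within_branch:
  assumes "{a, b} \<in> E" "x \<in> branch a b" "y \<in> branch a b"
  shows "conn {f\<in>E. f \<subseteq> branch a b} x y"
proof -
  have "conn {f\<in>E. f \<subseteq> branch a b} b u" if "u \<in> branch a b" for u
    using that[unfolded branch_def mem_Collect_eq conn_def]
  proof (induction rule: rtranclp_induct)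
    case (step y z)
    have "y \<in> branch a b" using step(1) by (simp add: branch_def conn_def)
    moreover have "z \<in> branch a b"
      using step(1,2) by (simp add: branch_def conn_def rtranclp.rtrancl_into_rtrancl)
    moreover have "{y, z} \<in> E" using step(2) by (simp add: adj_def)
    ultimately have "{y, z} \<in> {f\<in>E. f \<subseteq> branch a b}" by simp
    then show ?case by (rule conn_step[OF step(3)])
  qed simp
  then have "conn {f\<in>E. f \<subseteq> branch a b} b x" "conn {f\<in>E. f \<subseteq> branch a b} b y"
    using assms(2,3) by blast+
  then show ?thesis by (rule conn_trans[OF conn_sym])
qed

lemma conn_within_branch_avoiding_source:
  assumes "{a, b} \<in> E" "x \<in> branch a b" "y \<in> branch a b"
  shows "conn {f\<in>E. a \<notin> f} x y"
proof (rule conn_mono[OF conn_within_branch[OF assms]])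
  show "{f\<in>E. f \<subseteq> branch a b} \<subseteq> {f\<in>E. a \<notin> f}"
    using source_notin_branch[OF assms(1)] by blast
qed

lemma branch_of_neighbour:
  assumes "v \<in> V" "u \<in> V" "u \<noteq> v"
  shows "\<exists>c. {v, c} \<in> E \<and> u \<in> branch v c"
proof -
  have "conn E v u" using tree_connected assms by blast
  then have "u = v \<or> (\<exists>c. {v, c} \<in> E \<and> u \<in> branch v c)" unfolding conn_def
  proof (induction rule: rtranclp_induct)
    case (step y z)
    have yz: "{y, z} \<in> E" using step(2) by (simp add: adj_def)
    from step(3) show ?case
    proof
      assume "y = v"
      then show ?thesis using yz branch_self by blast
    next
      assume "\<exists>c. {v, c} \<in> E \<and> y \<in> branch v c"
      then obtain c where c: "{v, c} \<in> E" "y \<in> branch v c" by blast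
      show ?thesis
      proof (cases "z \<in> branch v c")
        case False
        then show ?thesis using edge_leaving_branch[OF c(1,2) yz] by blast
      qed (use c in blast)
    qed
  qed simp
  then show ?thesis using assms by blast
qed

lemma branch_disjoint:
  assumes "{v, c} \<in> E" "{v, c'} \<in> E" "c \<noteq> c'"
  shows "branch v c \<inter> branch v c' = {}"
proof (rule ccontr)
  assume "branch v c \<inter> branch v c' \<noteq> {}"
  then obtain x where x: "x \<in> branch v c" "x \<in> branch v c'" by blast
  have "c' \<notin> branch v c"
  proof
    assume "c' \<in> branch v c"
    moreover have "{c', v} \<in> E" using assms(2) by (simp add: insert_commute)
    ultimately show False
      using edge_leaving_branch[OF assms(1), of c' v] source_notin_branch[OF assms(1)] assms(3)
      by blast
  qed
  moreover have "conn (E - {{v, c'}}) c' x" using x by (simp add: branch_def)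
  ultimately have "conn (E - {{v, c'}}) c' v"
    using conn_into_branch[OF assms(1), of "E - {{v, c'}}" c' x] x by blast
  then have "conn (E - {{v, c'}}) v c'" by (rule conn_sym)
  then show False using edge_is_bridge[OF assms(2)] by blast
qed



definition neighbours :: "'a \<Rightarrow> 'a set" where
  "neighbours v = {c. {v, c} \<in> E}"

lemma finite_neighbours: "finite (neighbours v)"
proof -
  have "neighbours v \<subseteq> V" using edge_endpoints by (auto simp: neighbours_def)
  then show ?thesis using finite_V by (rule finite_subset)
qed

lemma card_neighbours_le_degree: "card (neighbours v) \<le> degree E v"
proof -
  have "inj_on (\<lambda>c. {v, c}) (neighbours v)" by (auto simp: inj_on_def doubleton_eq_iff)
  moreover have "(\<lambda>c. {v, c}) ` neighbours v \<subseteq> {e\<in>E. v \<in> e}" by (auto simp: neighbours_def)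
  ultimately show ?thesis unfolding degree_def using finite_E by (simp add: card_inj_on_le)
qed

definition pruned_vertices :: "'a \<Rightarrow> 'a set \<Rightarrow> 'a set" where
  "pruned_vertices v S = V - (\<Union>c\<in>S. branch v c - {c})"

definition pruned_edges :: "'a \<Rightarrow> 'a set \<Rightarrow> 'a set set" where
  "pruned_edges v S = {f\<in>E. \<forall>c\<in>S. \<not> f \<subseteq> branch v c}"

lemma pruned_vertices_subset: "pruned_vertices v S \<subseteq> V"
  by (auto simp: pruned_vertices_def)

lemma pruned_edges_subset: "pruned_edges v S \<subseteq> E"
  by (auto simp: pruned_edges_def)

context
  fixes v S
  assumes S: "S \<subseteq> neighbours v"
begin

lemma S_edge: "c \<in> S \<Longrightarrow> {v, c} \<in> E"
  using S by (auto simp: neighbours_def)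

lemma finite_S: "finite S"
  using S finite_neighbours by (rule finite_subset)

lemma S_branches_disjoint: "c \<in> S \<Longrightarrow> c' \<in> S \<Longrightarrow> x \<in> branch v c \<Longrightarrow> x \<in> branch v c' \<Longrightarrow> c = c'"
  using branch_disjoint S_edge by blast

lemma pruned_edge_subset: "f \<in> pruned_edges v S \<Longrightarrow> f \<subseteq> pruned_vertices v S"
proof -
  have *: "x \<notin> branch v c - {c}" if "{x, y} \<in> pruned_edges v S" "c \<in> S" for x y c
  proof
    assume x: "x \<in> branch v c - {c}"
    have xy: "{x, y} \<in> E" "\<not> {x, y} \<subseteq> branch v c"
      using that by (auto simp: pruned_edges_def)
    have "y \<in> branch v c"
    proof (rule ccontr)
      assume "y \<notin> branch v c"
      then have "x = c" using edge_leaving_branch[OF S_edge[OF that(2)] _ xy(1)] x by blast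
      then show False using x by blast
    qed
    then show False using xy(2) x by blast
  qed
  assume f: "f \<in> pruned_edges v S"
  then have "f \<in> E" by (simp add: pruned_edges_def)
  then obtain x y where xy: "f = {x, y}" "x \<in> V" "y \<in> V"
    using edge_doubleton by blast
  moreover have "{x, y} \<in> pruned_edges v S" "{y, x} \<in> pruned_edges v S"
    using f xy(1) by (simp_all add: insert_commute)
  ultimately show ?thesis using * unfolding pruned_vertices_def by blast
qed

text \<open>Collapsing each removed branch onto its root c maps edges of the tree to edges
  of the pruned tree or to single vertices.\<close>
lemma conn_pruned:
  assumes "a \<in> pruned_vertices v S" "b \<in> pruned_vertices v S"
  shows "conn (pruned_edges v S) a b"
proof -
  define p where "p x = (if \<exists>c\<in>S. x \<in> branch v c then THE c. c \<in> S \<and> x \<in> branch v c else x)"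
    for x
  have p_branch: "p x = c" if "c \<in> S" "x \<in> branch v c" for x c
  proof -
    have "(THE c. c \<in> S \<and> x \<in> branch v c) = c"
      using that S_branches_disjoint by (intro the_equality) blast+
    then show ?thesis using that by (auto simp: p_def)
  qed
  have p_outside: "p x = x" if "\<forall>c\<in>S. x \<notin> branch v c" for x
    using that by (simp add: p_def)
  have p_fixes: "p x = x" if "x \<in> pruned_vertices v S" for x
  proof (cases "\<exists>c\<in>S. x \<in> branch v c")
    case True
    then obtain c where "c \<in> S" "x \<in> branch v c" by blast
    moreover have "x = c" using that calculation by (auto simp: pruned_vertices_def)
    ultimately show ?thesis using p_branch by blast
  qed (use p_outside in blast)
  have v_outside: "\<forall>c\<in>S. v \<notin> branch v c"
    using source_notin_branch S_edge by blast
  have p_edge_from_branch: "p x = p y \<or> {p x, p y} \<in> pruned_edges v S"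
    if xy: "{x, y} \<in> E" and c: "c \<in> S" "x \<in> branch v c" for x y c
  proof (cases "y \<in> branch v c")
    case True
    then show ?thesis using p_branch[OF c] p_branch[OF c(1)] by simp
  next
    case False
    then have "x = c \<and> y = v" using edge_leaving_branch[OF S_edge[OF c(1)] c(2) xy] by blast
    moreover have "{c, v} \<in> pruned_edges v S"
      using S_edge[OF c(1)] v_outside by (auto simp: pruned_edges_def insert_commute)
    ultimately show ?thesis using p_branch[OF c] p_outside v_outside by simp
  qed
  have p_edge: "p x = p y \<or> {p x, p y} \<in> pruned_edges v S" if xy: "{x, y} \<in> E" for x y
  proof -
    consider (x) c where "c \<in> S" "x \<in> branch v c" | (y) c where "c \<in> S" "y \<in> branch v c"
      | (neither) "\<forall>c\<in>S. x \<notin> branch v c" "\<forall>c\<in>S. y \<notin> branch v c"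
      by blast
    then show ?thesis
    proof cases
      case x
      then show ?thesis using p_edge_from_branch xy by blast
    next
      case y
      have "{y, x} \<in> E" using xy by (simp add: insert_commute)
      then have "p y = p x \<or> {p y, p x} \<in> pruned_edges v S"
        using p_edge_from_branch y by blast
      then show ?thesis by (metis insert_commute)
    next
      case neither
      then have "{x, y} \<in> pruned_edges v S" using xy by (auto simp: pruned_edges_def)
      then show ?thesis using neither p_outside by simp
    qed
  qed
  have "conn E a b" using assms pruned_vertices_subset tree_connected by blast
  then have "conn (pruned_edges v S) (p a) (p b)" using p_edge by (rule conn_map)
  then show ?thesis using assms p_fixes by simp
qed

lemma is_tree_pruned:
  assumes "v \<in> V"
  shows "is_tree (pruned_vertices v S) (pruned_edges v S)"
proof -
  have "\<exists>x y. f = {x, y} \<and> x \<noteq> y \<and> x \<in> pruned_vertices v S \<and> y \<in> pruned_vertices v S"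
    if "f \<in> pruned_edges v S" for f
    using edge_doubleton[of f] pruned_edge_subset[OF that] that by (auto simp: pruned_edges_def)
  then have "is_graph (pruned_vertices v S) (pruned_edges v S)"
    unfolding is_graph_def using finite_subset[OF pruned_vertices_subset finite_V] by blast
  moreover have "v \<in> pruned_vertices v S"
    using assms source_notin_branch S_edge by (auto simp: pruned_vertices_def)
  moreover have "acyclic_graph (pruned_edges v S)"
    using tree acyclic_graph_subset[OF _ pruned_edges_subset] by (simp add: is_tree_def)
  ultimately show ?thesis
    using conn_pruned by (auto simp: is_tree_def connected_graph_def)
qed

lemma card_pruned_vertices:
  "real (card (pruned_vertices v S)) = real (card V) - (\<Sum>c\<in>S. real (card (branch v c)) - 1)"
proof -
  define U where "U = (\<Union>c\<in>S. branch v c - {c})"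
  have U_subset: "U \<subseteq> V" unfolding U_def using branch_subset_V S_edge by blast
  have "card U = (\<Sum>c\<in>S. card (branch v c - {c}))"
    unfolding U_def using finite_S finite_branch S_edge S_branches_disjoint
    by (subst card_UN_disjoint) auto
  then have "real (card U) = (\<Sum>c\<in>S. real (card (branch v c) - 1))"
    by simp
  also have "\<dots> = (\<Sum>c\<in>S. real (card (branch v c)) - 1)"
    using card_branch_ge_1 S_edge by (intro sum.cong) (simp_all add: of_nat_diff)
  finally have "real (card U) = (\<Sum>c\<in>S. real (card (branch v c)) - 1)" .
  moreover have "card (pruned_vertices v S) = card V - card U"
    unfolding pruned_vertices_def U_def[symmetric]
    using U_subset finite_V by (meson card_Diff_subset finite_subset)
  moreover have "card U \<le> card V" using U_subset finite_V by (rule card_mono[rotated])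
  ultimately show ?thesis by simp
qed

lemma components_pruned:
  "components (diff_verts E (pruned_edges v S)) (E - pruned_edges v S)
     \<subseteq> (\<lambda>c. diff_verts E (pruned_edges v S) \<inter> branch v c) ` S"
proof
  let ?W = "diff_verts E (pruned_edges v S)" and ?R = "E - pruned_edges v S"
  have R: "?R = {f\<in>E. \<exists>c\<in>S. f \<subseteq> branch v c}" by (auto simp: pruned_edges_def)
  fix C assume "C \<in> components ?W ?R"
  then obtain x where x: "x \<in> ?W" and C: "C = {u\<in>?W. conn ?R x u}"
    by (auto simp: components_def)
  then obtain f c where f: "f \<in> E" "x \<in> f" "f \<subseteq> branch v c" and c: "c \<in> S"
    unfolding diff_verts_def R by blast
  have "u \<in> branch v c" if "conn ?R x u" for u
    using that unfolding conn_def
  proof (induction rule: rtranclp_induct)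
    case (step y z)
    then obtain c' where "c' \<in> S" "{y, z} \<subseteq> branch v c'" by (auto simp: adj_def R)
    then show ?case using S_branches_disjoint[OF c] step(3) by blast
  qed (use f in blast)
  moreover have "conn ?R x u" if "u \<in> branch v c" for u
  proof (rule conn_mono)
    show "conn {f\<in>E. f \<subseteq> branch v c} x u"
      using conn_within_branch[OF S_edge[OF c]] f that by blast
    show "{f\<in>E. f \<subseteq> branch v c} \<subseteq> ?R" using c R by blast
  qed
  ultimately have "C = ?W \<inter> branch v c" using C by blast
  then show "C \<in> (\<lambda>c. ?W \<inter> branch v c) ` S" using c by blast
qed

lemma card_components_pruned_le:
  "card (components (diff_verts E (pruned_edges v S)) (E - pruned_edges v S)) \<le> card S"
  using card_mono[OF finite_imageI[OF finite_S] components_pruned] card_image_le[OF finite_S]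
  by (rule le_trans)

lemma card_component_pruned_le:
  assumes "C \<in> components (diff_verts E (pruned_edges v S)) (E - pruned_edges v S)"
  shows "\<exists>c\<in>S. card C \<le> card (branch v c)"
proof -
  obtain c where c: "c \<in> S" "C \<subseteq> branch v c" using components_pruned assms by blast
  then show ?thesis using card_mono[OF finite_branch[OF S_edge[OF c(1)]] c(2)] by blast
qed

end

end

locale rooted_tree = tree_graph +
  fixes r :: 'a
  assumes root_in_V: "r \<in> V"
begin

definition subtree :: "'a \<Rightarrow> 'a set" where
  "subtree v = insert v {u\<in>V. \<not> conn {f\<in>E. v \<notin> f} r u}"

definition children :: "'a \<Rightarrow> 'a set" where
  "children v = {c\<in>neighbours v. r \<notin> branch v c}"

lemma children_edge: "c \<in> children v \<Longrightarrow> {v, c} \<in> E"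
  by (simp add: children_def neighbours_def)

lemma children_subset_neighbours: "children v \<subseteq> neighbours v"
  by (auto simp: children_def)

lemma finite_children: "finite (children v)"
  using children_subset_neighbours finite_neighbours by (rule finite_subset)

lemma card_children_le_degree: "card (children v) \<le> degree E v"
  using card_mono[OF finite_neighbours children_subset_neighbours] card_neighbours_le_degree
  by (rule le_trans)

lemma subtree_root: "subtree r = V"
proof -
  have "\<not> conn {f\<in>E. r \<notin> f} r u" if "u \<noteq> r" for u
    using conn_imp_edge_at[of _ r u] that by blast
  then show ?thesis using root_in_V by (auto simp: subtree_def)
qed

lemma finite_subtree: "finite (subtree v)"
  using finite_V by (auto simp: subtree_def)

lemma branch_subset_subtree:
  assumes "c \<in> children v" "x \<in> {v, c}"
  shows "branch v c \<subseteq> subtree x"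
proof
  fix u assume u: "u \<in> branch v c"
  have e: "{v, c} \<in> E" and r: "r \<notin> branch v c" using assms(1) by (auto simp: children_def neighbours_def)
  have "\<not> conn {f\<in>E. x \<notin> f} r u"
  proof
    assume "conn {f\<in>E. x \<notin> f} r u"
    moreover have "{f\<in>E. x \<notin> f} \<subseteq> E" by blast
    ultimately have "{v, c} \<in> {f\<in>E. x \<notin> f}" using conn_into_branch[OF e _ _ r u] by blast
    then show False using assms(2) by auto
  qed
  then show "u \<in> subtree x" using branch_subset_V[OF e] u by (auto simp: subtree_def)
qed

lemma subtree_subset_branch:
  assumes "c \<in> children v"
  shows "subtree c \<subseteq> branch v c"
proof
  fix u assume u: "u \<in> subtree c"
  have e: "{v, c} \<in> E" and r: "r \<notin> branch v c" using assms by (auto simp: children_def neighbours_def)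
  have e': "{c, v} \<in> E" using e by (simp add: insert_commute)
  show "u \<in> branch v c"
  proof (rule ccontr)
    assume nu: "u \<notin> branch v c"
    then have "u \<in> V" "\<not> conn {f\<in>E. c \<notin> f} r u" using u by (auto simp: subtree_def)
    moreover have "u \<in> branch c v" "r \<in> branch c v"
      using branch_cover[OF e] root_in_V nu r \<open>u \<in> V\<close> by blast+
    ultimately show False using conn_within_branch_avoiding_source[OF e', of r u] by blast
  qed
qed

lemma subtree_child: "c \<in> children v \<Longrightarrow> subtree c = branch v c"
  using subtree_subset_branch branch_subset_subtree[of c v c] by blast

lemma card_subtree_child_less:
  assumes "c \<in> children v"
  shows "card (subtree c) < card (subtree v)"
proof -
  have "subtree c \<subseteq> subtree v" using subtree_child[OF assms] branch_subset_subtree[OF assms] by blast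
  moreover have "v \<notin> subtree c"
    using subtree_child[OF assms] source_notin_branch children_edge[OF assms] by blast
  moreover have "v \<in> subtree v" by (simp add: subtree_def)
  ultimately have "subtree c \<subset> subtree v" by blast
  then show ?thesis using finite_subtree psubset_card_mono by blast
qed

lemma subtree_subset_children_branches:
  assumes "v \<in> V"
  shows "subtree v \<subseteq> insert v (\<Union>c\<in>children v. branch v c)"
proof
  fix u assume u: "u \<in> subtree v"
  show "u \<in> insert v (\<Union>c\<in>children v. branch v c)"
  proof (cases "u = v")
    case False
    then have "u \<in> V" and nc: "\<not> conn {f\<in>E. v \<notin> f} r u" using u by (auto simp: subtree_def)
    then obtain c where e: "{v, c} \<in> E" and uc: "u \<in> branch v c"
      using branch_of_neighbour[OF assms] False by blast
    then have "r \<notin> branch v c" using conn_within_branch_avoiding_source[of v c r u] nc by blast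
    then show ?thesis using e uc by (auto simp: children_def neighbours_def)
  qed simp
qed

lemma card_subtree_le:
  assumes "v \<in> V"
  shows "card (subtree v) \<le> 1 + (\<Sum>c\<in>children v. card (branch v c))"
proof -
  have fin_U: "finite (\<Union>c\<in>children v. branch v c)"
    by (rule finite_UN_I[OF finite_children finite_branch[OF children_edge]])
  have "card (subtree v) \<le> card (insert v (\<Union>c\<in>children v. branch v c))"
    using subtree_subset_children_branches[OF assms] fin_U by (intro card_mono) auto
  also have "\<dots> \<le> 1 + card (\<Union>c\<in>children v. branch v c)"
    using fin_U by (simp add: card_insert_if)
  also have "\<dots> \<le> 1 + (\<Sum>c\<in>children v. card (branch v c))"
    using card_UN_le[OF finite_children] by simp
  finally show ?thesis .
qed

lemma exists_heavy_vertex_with_light_children: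
  fixes t :: real
  assumes "t < card V"
  shows "\<exists>v\<in>V. t < card (subtree v) \<and> (\<forall>c\<in>children v. card (branch v c) \<le> t)"
proof -
  define M where "M = {v\<in>V. t < card (subtree v)}"
  have "r \<in> M" using assms root_in_V subtree_root by (simp add: M_def)
  then obtain v where v: "v \<in> M" and min: "\<And>w. w \<in> M \<Longrightarrow> card (subtree v) \<le> card (subtree w)"
    using ex_has_least_nat[of "\<lambda>w. w \<in> M" r "\<lambda>w. card (subtree w)"] by blast
  have "card (branch v c) \<le> t" if c: "c \<in> children v" for c
  proof -
    have "c \<notin> M" using min card_subtree_child_less[OF c] by fastforce
    then show ?thesis
      using edge_endpoints[OF children_edge[OF c]] subtree_child[OF c] by (simp add: M_def)
  qed
  then show ?thesis using v by (auto simp: M_def)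
qed

lemma root_in_pruned_vertices: "S \<subseteq> children v \<Longrightarrow> r \<in> pruned_vertices v S"
  using root_in_V by (auto simp: pruned_vertices_def children_def)

lemma exists_balanced_pruning:
  fixes t :: real
  assumes "0 \<le> t" "t < card V" "D \<ge> 1" "\<forall>v\<in>V. degree E v \<le> D"
  shows "\<exists>v\<in>V. \<exists>S\<subseteq>children v. card S \<le> D \<and> (\<forall>c\<in>S. card (branch v c) \<le> t) \<and>
           t - 2 * D \<le> (\<Sum>c\<in>S. real (card (branch v c)) - 1) \<and>
           (\<Sum>c\<in>S. real (card (branch v c)) - 1) \<le> 2 * t"
proof -
  obtain v where v: "v \<in> V" and heavy: "t < card (subtree v)"
    and light: "\<And>c. c \<in> children v \<Longrightarrow> card (branch v c) \<le> t"
    using exists_heavy_vertex_with_light_children[OF assms(2)] by blast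
  define w where "w c = real (card (branch v c)) - 1" for c
  have card_children: "card (children v) \<le> D"
    using card_children_le_degree[of v] assms(4) v by fastforce
  moreover have "real (card (subtree v)) \<le> 1 + (\<Sum>c\<in>children v. real (card (branch v c)))"
    using of_nat_mono[OF card_subtree_le[OF v]] by simp
  moreover have "sum w (children v) = (\<Sum>c\<in>children v. real (card (branch v c))) - card (children v)"
    by (simp add: w_def sum_subtractf)
  ultimately have lower: "t - 2 * D \<le> sum w (children v)"
    using heavy assms(3) by linarith
  have w_bounds: "0 \<le> w c" "w c \<le> t" if "c \<in> children v" for c
    using card_branch_ge_1[OF children_edge[OF that]] light[OF that] by (auto simp: w_def)
  obtain S where S: "S \<subseteq> children v" and "t - 2 * D \<le> sum w S"
    and upper: "sum w S \<le> max (t - 2 * D) 0 + t"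
    using subset_sum_between[OF finite_children w_bounds assms(1) lower] by blast
  moreover have "sum w S \<le> 2 * t" using upper assms(1) by simp
  moreover have "card S \<le> D" using card_mono[OF finite_children S] card_children by (rule le_trans)
  moreover have "\<forall>c\<in>S. card (branch v c) \<le> t" using S light by blast
  ultimately show ?thesis using S unfolding w_def by (intro bexI[OF _ v] exI[of _ S]) simp
qed

end

theorem lemma7p1:
  fixes V :: "'a set" and E :: "'a set set" and r :: 'a
    and D :: nat and lam :: real
  assumes "D \<ge> 1" and "0 \<le> lam" and "lam < 1"
    and "is_tree V E" and "r \<in> V"
    and "\<forall>v\<in>V. degree E v \<le> D"
  shows "\<exists>VQ EQ. VQ \<subseteq> V \<and> EQ \<subseteq> E \<and> is_tree VQ EQ \<and> r \<in> VQ \<and>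
           (1 - 2 * lam) * real (card V) \<le> real (card VQ) \<and>
           real (card VQ) \<le> (1 - lam) * real (card V) + 2 * real D \<and>
           card (components (diff_verts E EQ) (E - EQ)) \<le> D \<and>
           (\<forall>C\<in>components (diff_verts E EQ) (E - EQ). real (card C) \<le> lam * real (card V))"
proof -
  interpret rooted_tree V E r using assms(4,5) by unfold_locales
  have "0 < real (card V)" using assms(5) finite_V by (auto simp: card_gt_0_iff)
  then have "lam * card V < card V" using assms(3) by (simp add: mult_less_cancel_right2)
  moreover have "0 \<le> lam * card V" using assms(2) by simp
  ultimately obtain v S where v: "v \<in> V" and S: "S \<subseteq> children v" and card_S: "card S \<le> D"
    and light: "\<forall>c\<in>S. card (branch v c) \<le> lam * card V"
    and excess: "lam * card V - 2 * real D \<le> (\<Sum>c\<in>S. real (card (branch v c)) - 1)"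
      "(\<Sum>c\<in>S. real (card (branch v c)) - 1) \<le> 2 * (lam * card V)"
    using exists_balanced_pruning[OF _ _ assms(1,6)] by meson
  have S_neighbours: "S \<subseteq> neighbours v" using S children_subset_neighbours by (rule order_trans)
  show ?thesis
  proof (intro exI conjI)
    show "pruned_vertices v S \<subseteq> V" by (rule pruned_vertices_subset)
    show "pruned_edges v S \<subseteq> E" by (rule pruned_edges_subset)
    show "is_tree (pruned_vertices v S) (pruned_edges v S)" using is_tree_pruned[OF S_neighbours v] .
    show "r \<in> pruned_vertices v S" using root_in_pruned_vertices[OF S] .
    show "(1 - 2 * lam) * real (card V) \<le> real (card (pruned_vertices v S))"
      "real (card (pruned_vertices v S)) \<le> (1 - lam) * real (card V) + 2 * real D"
      using card_pruned_vertices[OF S_neighbours] excess by (simp_all add: algebra_simps)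
    show "card (components (diff_verts E (pruned_edges v S)) (E - pruned_edges v S)) \<le> D"
      using card_components_pruned_le[OF S_neighbours] card_S by (rule le_trans)
    show "\<forall>C\<in>components (diff_verts E (pruned_edges v S)) (E - pruned_edges v S).
            real (card C) \<le> lam * real (card V)"
      using card_component_pruned_le[OF S_neighbours] light by (meson of_nat_le_iff order_trans)
  qed
qed

end
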